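(* Let $\mathbf{Q}=(Q,Z,\cdot)$ be a finite automaton, $q\in Q$ and $a\in Z$. If the identity $\Gamma(\mathbf{Q},q)$ holds in a Conway category $\mathcal{C}$, then so does the identity $\Gamma(\mathbf{Q},qa)$.
   Context: Cartesian categories have chosen finite products (terminal object $T$, projections $\pi_i$, tupling $\langle\cdot\rangle$, $!_A:A\to T$, $f\times g$), strictly associative; composition is written $g\circ f$; $\Delta_{A^n}=\langle 1_A,\ldots,1_A\rangle:A\to A^n$. A dagger operation maps $f:A\times C\to A$ to $f^\dagger:C\to A$. A Conway category is a cartesian category with dagger satisfying: $(f\circ(1_A\times g))^\dagger=f^\dagger\circ g$ ($f:A\times B\to A$, $g:C\to B$); $f^{\dagger\dagger}=(f\circ(\Delta_{A^2}\times 1_C))^\dagger$ ($f:A\times A\times C\to A$); $(f\circ\langle g,\pi_2^{A\times C}\rangle)^\dagger=f\circ\langle (g\circ\langle f,\pi_2^{B\times C}\rangle)^\dagger,1_C\rangle$ ($f:B\times C\to A$, $g:A\times C\to B$). A finite automaton $\mathbf{Q}=(Q,Z,\cdot)$ has finite nonempty state set $Q$, finite nonempty input alphabet $Z$ and action $Q\times Z\to Q$, written $qa=q\cdot a$. Write $Q=\{q_1,\ldots,q_n\}$, identified with $\{1,\ldots,n\}$, and $Z=\{a_1,\ldots,a_m\}$. For an object $A$ and $i\in[n]$ let $\rho_i^{\mathbf{Q},A}=\langle\pi^{A^n}_{ia_1},\ldots,\pi^{A^n}_{ia_m}\rangle:A^n\to A^m$ ($ia_j$ is the index of $q_i\cdot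 a_j$). For $f:A^m\times C\to A$ let $f^{\mathbf{Q},A}:A^n\times C\to A^n$ have components $\pi_i^{A^n}\circ f^{\mathbf{Q},A}=f\circ(\rho_i^{\mathbf{Q},A}\times 1_C)$. For a state $q_i$, the identity $\Gamma(\mathbf{Q},q_i)$ holds in $\mathcal{C}$ if $\pi_i^{A^n}\circ(f^{\mathbf{Q},A})^\dagger=(f\circ(\Delta_{A^m}\times 1_C))^\dagger$ for all objects $A,C$ and all $f:A^m\times C\to A$. *)

theory Defs
  imports Main
begin

text \<open>A category presented by a set of arrows with domain/codomain (objects are all
elements of the object type), equipped with chosen finite products given by a
list-indexed product operation on objects that is strictly associative, and with a
dagger operation.  The dagger is indexed by the parameter object C:
for f : A \<times> C \<rightarrow> A, dag C f : C \<rightarrow> A.\<close>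

record ('o, 'm) dcat =
  arr  :: "'m set"
  cdom :: "'m \<Rightarrow> 'o"
  ccod :: "'m \<Rightarrow> 'o"
  cmp  :: "'m \<Rightarrow> 'm \<Rightarrow> 'm"          \<comment> \<open>cmp g f = g \<circ> f\<close>
  idm  :: "'o \<Rightarrow> 'm"
  prd  :: "'o list \<Rightarrow> 'o"             \<comment> \<open>A1 \<times> ... \<times> An; prd [] = T\<close>
  prj  :: "'o list \<Rightarrow> nat \<Rightarrow> 'm"     \<comment> \<open>prj As i = \<pi>_i (0-based)\<close>
  tpl  :: "'o \<Rightarrow> 'm list \<Rightarrow> 'm"
  dag  :: "'o \<Rightarrow> 'm \<Rightarrow> 'm"

definition hom :: "('o,'m) dcat \<Rightarrow> 'o \<Rightarrow> 'o \<Rightarrow> 'm set" where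
  "hom K A B = {f \<in> arr K. cdom K f = A \<and> ccod K f = B}"

definition is_category :: "('o,'m) dcat \<Rightarrow> bool" where
  "is_category K \<longleftrightarrow>
     (\<forall>A. idm K A \<in> hom K A A) \<and>
     (\<forall>f \<in> arr K. \<forall>g \<in> arr K. cdom K g = ccod K f \<longrightarrow>
         cmp K g f \<in> hom K (cdom K f) (ccod K g)) \<and>
     (\<forall>f \<in> arr K. cmp K f (idm K (cdom K f)) = f \<and> cmp K (idm K (ccod K f)) f = f) \<and>
     (\<forall>f \<in> arr K. \<forall>g \<in> arr K. \<forall>h \<in> arr K.
         cdom K g = ccod K f \<longrightarrow> cdom K h = ccod K g \<longrightarrow>
         cmp K h (cmp K g f) = cmp K (cmp K h g) f)"

text \<open>Chosen finite products (n-ary, including the terminal object prd []),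
strictly associative: nested products of nonempty lists are literally the flattened
product, with the projections being the corresponding tuples of projections;
also a unary product is the object itself.\<close>

definition is_cartesian :: "('o,'m) dcat \<Rightarrow> bool" where
  "is_cartesian K \<longleftrightarrow> is_category K \<and>
     (\<forall>As i. i < length As \<longrightarrow> prj K As i \<in> hom K (prd K As) (As ! i)) \<and>
     (\<forall>C fs. (\<forall>f \<in> set fs. f \<in> arr K \<and> cdom K f = C) \<longrightarrow>
        tpl K C fs \<in> hom K C (prd K (map (ccod K) fs)) \<and>
        (\<forall>i < length fs. cmp K (prj K (map (ccod K) fs) i) (tpl K C fs) = fs ! i)) \<and>
     (\<forall>C As h. h \<in> hom K C (prd K As) \<longrightarrow>
        tpl K C (map (\<lambda>i. cmp K (prj K As i) h) [0..<length As]) = h) \<and>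
     (\<forall>A. prd K [A] = A \<and> prj K [A] 0 = idm K A) \<and>
     (\<forall>Ass. (\<forall>As \<in> set Ass. As \<noteq> []) \<longrightarrow>
        prd K (map (prd K) Ass) = prd K (concat Ass) \<and>
        (\<forall>k < length Ass. prj K (map (prd K) Ass) k =
           tpl K (prd K (concat Ass))
             (map (\<lambda>j. prj K (concat Ass) (sum_list (map length (take k Ass)) + j))
                  [0..<length (Ass ! k)])))"

definition ctimes :: "('o,'m) dcat \<Rightarrow> 'm \<Rightarrow> 'm \<Rightarrow> 'm" where
  "ctimes K f g = tpl K (prd K [cdom K f, cdom K g])
     [cmp K f (prj K [cdom K f, cdom K g] 0), cmp K g (prj K [cdom K f, cdom K g] 1)]"

definition cdiag :: "('o,'m) dcat \<Rightarrow> 'o \<Rightarrow> nat \<Rightarrow> 'm" where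
  "cdiag K A n = tpl K A (replicate n (idm K A))"

definition cpow :: "('o,'m) dcat \<Rightarrow> 'o \<Rightarrow> nat \<Rightarrow> 'o" where
  "cpow K A n = prd K (replicate n A)"

definition cprod2 :: "('o,'m) dcat \<Rightarrow> 'o \<Rightarrow> 'o \<Rightarrow> 'o" where
  "cprod2 K A B = prd K [A, B]"

definition is_conway :: "('o,'m) dcat \<Rightarrow> bool" where
  "is_conway K \<longleftrightarrow> is_cartesian K \<and>
     (\<forall>A C f. f \<in> hom K (cprod2 K A C) A \<longrightarrow> dag K C f \<in> hom K C A) \<and>
     \<comment> \<open>parameter identity\<close>
     (\<forall>A B C f g. f \<in> hom K (cprod2 K A B) A \<longrightarrow> g \<in> hom K C B \<longrightarrow>
        dag K C (cmp K f (ctimes K (idm K A) g)) = cmp K (dag K B f) g) \<and>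
     \<comment> \<open>double dagger identity\<close>
     (\<forall>A C f. f \<in> hom K (cprod2 K A (cprod2 K A C)) A \<longrightarrow>
        dag K C (dag K (cprod2 K A C) f) =
        dag K C (cmp K f (ctimes K (cdiag K A 2) (idm K C)))) \<and>
     \<comment> \<open>composition identity\<close>
     (\<forall>A B C f g. f \<in> hom K (cprod2 K B C) A \<longrightarrow> g \<in> hom K (cprod2 K A C) B \<longrightarrow>
        dag K C (cmp K f (tpl K (cprod2 K A C) [g, prj K [A, C] 1])) =
        cmp K f (tpl K C
          [dag K C (cmp K g (tpl K (cprod2 K B C) [f, prj K [B, C] 1])), idm K C]))"

text \<open>Finite automaton with states {0..<n} and inputs {0..<m}; delta i j is the
index of q_i \<cdot> a_j.\<close>

definition is_automaton :: "nat \<Rightarrow> nat \<Rightarrow> (nat \<Rightarrow> nat \<Rightarrow> nat) \<Rightarrow> bool" where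
  "is_automaton n m \<delta> \<longleftrightarrow> 0 < n \<and> 0 < m \<and> (\<forall>i<n. \<forall>j<m. \<delta> i j < n)"

definition rho :: "('o,'m) dcat \<Rightarrow> nat \<Rightarrow> nat \<Rightarrow> (nat \<Rightarrow> nat \<Rightarrow> nat) \<Rightarrow> 'o \<Rightarrow> nat \<Rightarrow> 'm" where
  "rho K n m \<delta> A i =
     tpl K (cpow K A n) (map (\<lambda>j. prj K (replicate n A) (\<delta> i j)) [0..<m])"

definition fQ :: "('o,'m) dcat \<Rightarrow> nat \<Rightarrow> nat \<Rightarrow> (nat \<Rightarrow> nat \<Rightarrow> nat) \<Rightarrow> 'o \<Rightarrow> 'o \<Rightarrow> 'm \<Rightarrow> 'm" where
  "fQ K n m \<delta> A C f =
     tpl K (cprod2 K (cpow K A n) C)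
       (map (\<lambda>i. cmp K f (ctimes K (rho K n m \<delta> A i) (idm K C))) [0..<n])"

definition Gamma :: "('o,'m) dcat \<Rightarrow> nat \<Rightarrow> nat \<Rightarrow> (nat \<Rightarrow> nat \<Rightarrow> nat) \<Rightarrow> nat \<Rightarrow> bool" where
  "Gamma K n m \<delta> i \<longleftrightarrow>
     (\<forall>A C f. f \<in> hom K (cprod2 K (cpow K A m) C) A \<longrightarrow>
        cmp K (prj K (replicate n A) i) (dag K C (fQ K n m \<delta> A C f)) =
        dag K C (cmp K f (ctimes K (cdiag K A m) (idm K C))))"

end

theory Submission
  imports Defs
begin

text \<open>Given \<open>f : A\<^sup>m \<times> C \<rightarrow> A\<close>, let \<open>F : (A \<times> A)\<^sup>m \<times> C \<rightarrow> A \<times> A\<close> be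
  \<open>F(x, c) = (f(\<pi>\<^sub>0\<^sup>m x, c), \<pi>\<^sub>0 x\<^sub>a)\<close> (\<open>track\<close>, with \<open>\<pi>\<^sub>0\<^sup>m = fst_pow\<close>): it runs \<open>f\<close> on first
  coordinates and copies the first coordinate of the \<open>a\<close>-th input into the second.
  Then \<open>F\<^sup>Q = H \<circ> (\<pi>\<^sub>0\<^sup>n \<times> 1)\<close> with \<open>H(y, c)\<^sub>i = (f(\<rho>\<^sub>i y, c), y\<^sub>i\<^sub>a)\<close> (\<open>track_states\<close>), and
  \<open>\<pi>\<^sub>0\<^sup>n \<circ> H = f\<^sup>Q\<close>; so the composition identity gives \<open>(F\<^sup>Q)\<^sup>\<dagger> = H \<circ> \<langle>(f\<^sup>Q)\<^sup>\<dagger>, 1\<rangle>\<close>,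
  whose \<open>q\<close>-th component has second coordinate \<open>\<pi>\<^sub>q\<^sub>a (f\<^sup>Q)\<^sup>\<dagger>\<close>.  Likewise
  \<open>F \<circ> (\<Delta> \<times> 1) = H' \<circ> (\<pi>\<^sub>0 \<times> 1)\<close> with \<open>H'(v, c) = (f(\<Delta> v, c), v)\<close> (\<open>track_diag\<close>) and
  \<open>\<pi>\<^sub>0 \<circ> H' = f \<circ> (\<Delta> \<times> 1)\<close>, so the second coordinate of \<open>(F \<circ> (\<Delta> \<times> 1))\<^sup>\<dagger>\<close> is
  \<open>(f \<circ> (\<Delta> \<times> 1))\<^sup>\<dagger>\<close>.  Applying \<open>\<Gamma>(Q, q)\<close> to \<open>F\<close> and projecting to the second
  coordinate yields \<open>\<Gamma>(Q, qa)\<close>.\<close>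

locale cartesian_cat =
  fixes K :: "('o,'m) dcat"
  assumes cartesian: "is_cartesian K"
begin

lemma category: "is_category K"
  using cartesian unfolding is_cartesian_def by blast

lemma homD: "f \<in> hom K A B \<Longrightarrow> f \<in> arr K \<and> cdom K f = A \<and> ccod K f = B"
  unfolding hom_def by auto

lemma homI: "f \<in> arr K \<Longrightarrow> cdom K f = A \<Longrightarrow> ccod K f = B \<Longrightarrow> f \<in> hom K A B"
  unfolding hom_def by auto

lemma idm_arr [simp]: "idm K A \<in> arr K"
  and idm_dom [simp]: "cdom K (idm K A) = A"
  and idm_cod [simp]: "ccod K (idm K A) = A"
  using category unfolding is_category_def hom_def by auto

lemma cmp_arr [simp]: "g \<in> arr K \<Longrightarrow> f \<in> arr K \<Longrightarrow> cdom K g = ccod K f \<Longrightarrow> cmp K g f \<in> arr K"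
  and cmp_dom [simp]: "g \<in> arr K \<Longrightarrow> f \<in> arr K \<Longrightarrow> cdom K g = ccod K f \<Longrightarrow> cdom K (cmp K g f) = cdom K f"
  and cmp_cod [simp]: "g \<in> arr K \<Longrightarrow> f \<in> arr K \<Longrightarrow> cdom K g = ccod K f \<Longrightarrow> ccod K (cmp K g f) = ccod K g"
  using category unfolding is_category_def hom_def by auto

lemma cmp_idm_left [simp]: "f \<in> arr K \<Longrightarrow> ccod K f = B \<Longrightarrow> cmp K (idm K B) f = f"
  and cmp_idm_right [simp]: "f \<in> arr K \<Longrightarrow> cdom K f = B \<Longrightarrow> cmp K f (idm K B) = f"
  using category unfolding is_category_def by auto

lemma cmp_assoc [simp]:
  "f \<in> arr K \<Longrightarrow> g \<in> arr K \<Longrightarrow> h \<in> arr K \<Longrightarrow> cdom K g = ccod K f \<Longrightarrow> cdom K h = ccod K g \<Longrightarrow>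
   cmp K (cmp K h g) f = cmp K h (cmp K g f)"
  using category unfolding is_category_def by metis

text \<open>Since composites are kept right-associated, an equation \<open>p \<circ> t = r\<close> is only usable
  by the simplifier in the form \<open>p \<circ> (t \<circ> k) = r \<circ> k\<close>.\<close>

lemma cmp_reassoc:
  "cmp K p t = r \<Longrightarrow> p \<in> arr K \<Longrightarrow> t \<in> arr K \<Longrightarrow> cdom K p = ccod K t \<Longrightarrow> k \<in> arr K \<Longrightarrow>
   cdom K t = ccod K k \<Longrightarrow> cmp K p (cmp K t k) = cmp K r k"
  by (metis cmp_assoc)

lemma prj_arr [simp]: "i < length As \<Longrightarrow> prj K As i \<in> arr K"
  and prj_dom [simp]: "i < length As \<Longrightarrow> cdom K (prj K As i) = prd K As"
  and prj_cod [simp]: "i < length As \<Longrightarrow> ccod K (prj K As i) = As ! i"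
  using cartesian unfolding is_cartesian_def hom_def by auto

lemma prj_hom: "i < length As \<Longrightarrow> prj K As i \<in> hom K (prd K As) (As ! i)"
  by (simp add: homI)

lemma tpl_hom_prj:
  "\<forall>f\<in>set fs. f \<in> arr K \<and> cdom K f = X \<Longrightarrow>
   tpl K X fs \<in> hom K X (prd K (map (ccod K) fs)) \<and>
   (\<forall>i<length fs. cmp K (prj K (map (ccod K) fs) i) (tpl K X fs) = fs ! i)"
  using cartesian unfolding is_cartesian_def by blast

lemma prd_arr_eqI:
  assumes "h \<in> hom K X (prd K As)" and "h' \<in> hom K X (prd K As)"
    and "\<And>i. i < length As \<Longrightarrow> cmp K (prj K As i) h = cmp K (prj K As i) h'"
  shows "h = h'"
proof -
  have "\<And>h. h \<in> hom K X (prd K As) \<Longrightarrow> tpl K X (map (\<lambda>i. cmp K (prj K As i) h) [0..<length As]) = h"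
    using cartesian unfolding is_cartesian_def by blast
  with assms show ?thesis
    by (metis (no_types, lifting) atLeastLessThan_iff map_cong set_upt)
qed

lemma pow_arr_eqI:
  "h \<in> hom K X (prd K (replicate n A)) \<Longrightarrow> h' \<in> hom K X (prd K (replicate n A)) \<Longrightarrow>
   (\<And>i. i < n \<Longrightarrow> cmp K (prj K (replicate n A) i) h = cmp K (prj K (replicate n A) i) h') \<Longrightarrow> h = h'"
  by (rule prd_arr_eqI) auto

lemma pair_arr_eqI:
  "h \<in> hom K X (prd K [A,B]) \<Longrightarrow> h' \<in> hom K X (prd K [A,B]) \<Longrightarrow>
   cmp K (prj K [A,B] 0) h = cmp K (prj K [A,B] 0) h' \<Longrightarrow>
   cmp K (prj K [A,B] (Suc 0)) h = cmp K (prj K [A,B] (Suc 0)) h' \<Longrightarrow> h = h'"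
  by (rule prd_arr_eqI) (auto simp: less_Suc_eq)

lemma pair_arr [simp]:
  "f \<in> arr K \<Longrightarrow> g \<in> arr K \<Longrightarrow> cdom K f = X \<Longrightarrow> cdom K g = X \<Longrightarrow> tpl K X [f,g] \<in> arr K"
  and pair_dom [simp]:
  "f \<in> arr K \<Longrightarrow> g \<in> arr K \<Longrightarrow> cdom K f = X \<Longrightarrow> cdom K g = X \<Longrightarrow> cdom K (tpl K X [f,g]) = X"
  and pair_cod [simp]:
  "f \<in> arr K \<Longrightarrow> g \<in> arr K \<Longrightarrow> cdom K f = X \<Longrightarrow> cdom K g = X \<Longrightarrow>
   ccod K (tpl K X [f,g]) = prd K [ccod K f, ccod K g]"
  using tpl_hom_prj[of "[f,g]" X] unfolding hom_def by auto

lemma fst_pair [simp]: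
  "f \<in> arr K \<Longrightarrow> g \<in> arr K \<Longrightarrow> cdom K f = X \<Longrightarrow> cdom K g = X \<Longrightarrow> ccod K f = A \<Longrightarrow> ccod K g = B \<Longrightarrow>
   cmp K (prj K [A,B] 0) (tpl K X [f,g]) = f"
  and snd_pair [simp]:
  "f \<in> arr K \<Longrightarrow> g \<in> arr K \<Longrightarrow> cdom K f = X \<Longrightarrow> cdom K g = X \<Longrightarrow> ccod K f = A \<Longrightarrow> ccod K g = B \<Longrightarrow>
   cmp K (prj K [A,B] (Suc 0)) (tpl K X [f,g]) = g"
  using tpl_hom_prj[of "[f,g]" X] by (auto simp: less_Suc_eq)

lemma fst_pair_cmp [simp]:
  "f \<in> arr K \<Longrightarrow> g \<in> arr K \<Longrightarrow> cdom K f = X \<Longrightarrow> cdom K g = X \<Longrightarrow> ccod K f = A \<Longrightarrow> ccod K g = B \<Longrightarrow>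
   k \<in> arr K \<Longrightarrow> ccod K k = X \<Longrightarrow> cmp K (prj K [A,B] 0) (cmp K (tpl K X [f,g]) k) = cmp K f k"
  and snd_pair_cmp [simp]:
  "f \<in> arr K \<Longrightarrow> g \<in> arr K \<Longrightarrow> cdom K f = X \<Longrightarrow> cdom K g = X \<Longrightarrow> ccod K f = A \<Longrightarrow> ccod K g = B \<Longrightarrow>
   k \<in> arr K \<Longrightarrow> ccod K k = X \<Longrightarrow> cmp K (prj K [A,B] (Suc 0)) (cmp K (tpl K X [f,g]) k) = cmp K g k"
  by (rule cmp_reassoc; simp)+

lemma ctimes_arr [simp]: "f \<in> arr K \<Longrightarrow> g \<in> arr K \<Longrightarrow> ctimes K f g \<in> arr K"
  and ctimes_dom [simp]: "f \<in> arr K \<Longrightarrow> g \<in> arr K \<Longrightarrow> cdom K (ctimes K f g) = prd K [cdom K f, cdom K g]"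
  and ctimes_cod [simp]: "f \<in> arr K \<Longrightarrow> g \<in> arr K \<Longrightarrow> ccod K (ctimes K f g) = prd K [ccod K f, ccod K g]"
  unfolding ctimes_def by simp_all

lemma fst_ctimes [simp]:
  "f \<in> arr K \<Longrightarrow> g \<in> arr K \<Longrightarrow> ccod K f = B \<Longrightarrow> ccod K g = D \<Longrightarrow>
   cmp K (prj K [B,D] 0) (ctimes K f g) = cmp K f (prj K [cdom K f, cdom K g] 0)"
  and snd_ctimes [simp]:
  "f \<in> arr K \<Longrightarrow> g \<in> arr K \<Longrightarrow> ccod K f = B \<Longrightarrow> ccod K g = D \<Longrightarrow>
   cmp K (prj K [B,D] (Suc 0)) (ctimes K f g) = cmp K g (prj K [cdom K f, cdom K g] (Suc 0))"
  unfolding ctimes_def by simp_all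

lemma fst_ctimes_cmp [simp]:
  "f \<in> arr K \<Longrightarrow> g \<in> arr K \<Longrightarrow> ccod K f = B \<Longrightarrow> ccod K g = D \<Longrightarrow>
   k \<in> arr K \<Longrightarrow> ccod K k = prd K [cdom K f, cdom K g] \<Longrightarrow>
   cmp K (prj K [B,D] 0) (cmp K (ctimes K f g) k) = cmp K f (cmp K (prj K [cdom K f, cdom K g] 0) k)"
  and snd_ctimes_cmp [simp]:
  "f \<in> arr K \<Longrightarrow> g \<in> arr K \<Longrightarrow> ccod K f = B \<Longrightarrow> ccod K g = D \<Longrightarrow>
   k \<in> arr K \<Longrightarrow> ccod K k = prd K [cdom K f, cdom K g] \<Longrightarrow>
   cmp K (prj K [B,D] (Suc 0)) (cmp K (ctimes K f g) k) = cmp K g (cmp K (prj K [cdom K f, cdom K g] (Suc 0)) k)"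
  by (subst cmp_reassoc[OF fst_ctimes[of f g B D]] cmp_reassoc[OF snd_ctimes[of f g B D]]; simp)+

lemma tpl_pow_hom: "(\<And>i. i < n \<Longrightarrow> fs i \<in> hom K X A) \<Longrightarrow> tpl K X (map fs [0..<n]) \<in> hom K X (prd K (replicate n A))"
  and tpl_pow_prj: "(\<And>i. i < n \<Longrightarrow> fs i \<in> hom K X A) \<Longrightarrow> i < n \<Longrightarrow>
    cmp K (prj K (replicate n A) i) (tpl K X (map fs [0..<n])) = fs i"
proof -
  assume fs: "\<And>i. i < n \<Longrightarrow> fs i \<in> hom K X A"
  then have "map (ccod K) (map fs [0..<n]) = replicate n A"
    by (simp add: hom_def list_eq_iff_nth_eq)
  with tpl_hom_prj[of "map fs [0..<n]" X] fs
  show "tpl K X (map fs [0..<n]) \<in> hom K X (prd K (replicate n A))"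
    and "i < n \<Longrightarrow> cmp K (prj K (replicate n A) i) (tpl K X (map fs [0..<n])) = fs i"
    by (auto simp: hom_def)
qed

lemma cdiag_hom: "cdiag K A k \<in> hom K A (prd K (replicate k A))"
  and prj_cdiag: "j < k \<Longrightarrow> cmp K (prj K (replicate k A) j) (cdiag K A k) = idm K A"
proof -
  have diag: "cdiag K A k = tpl K A (map (\<lambda>_. idm K A) [0..<k])"
    unfolding cdiag_def by (simp add: map_replicate_const)
  show "cdiag K A k \<in> hom K A (prd K (replicate k A))"
    and "j < k \<Longrightarrow> cmp K (prj K (replicate k A) j) (cdiag K A k) = idm K A"
    unfolding diag by (rule tpl_pow_hom tpl_pow_prj; simp add: homI)+
qed

lemma ctimes_idm_tpl:
  assumes "g \<in> arr K" "h \<in> arr K" "k \<in> arr K" "ccod K h = cdom K g" "cdom K h = X" "cdom K k = X"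
  shows "cmp K (ctimes K g (idm K (ccod K k))) (tpl K X [h,k]) = tpl K X [cmp K g h, k]"
proof (rule pair_arr_eqI[of _ X "ccod K g" "ccod K k"])
  show "cmp K (ctimes K g (idm K (ccod K k))) (tpl K X [h,k]) \<in> hom K X (prd K [ccod K g, ccod K k])"
    using assms by (intro homI) simp_all
  show "tpl K X [cmp K g h, k] \<in> hom K X (prd K [ccod K g, ccod K k])"
    using assms by (intro homI) simp_all
  show "cmp K (prj K [ccod K g, ccod K k] 0) (cmp K (ctimes K g (idm K (ccod K k))) (tpl K X [h,k])) =
      cmp K (prj K [ccod K g, ccod K k] 0) (tpl K X [cmp K g h, k])"
    using assms by simp
  show "cmp K (prj K [ccod K g, ccod K k] (Suc 0)) (cmp K (ctimes K g (idm K (ccod K k))) (tpl K X [h,k])) =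
      cmp K (prj K [ccod K g, ccod K k] (Suc 0)) (tpl K X [cmp K g h, k])"
    using assms by simp
qed

lemma ctimes_idm_eq:
  "g \<in> arr K \<Longrightarrow> ctimes K g (idm K C) =
     tpl K (prd K [cdom K g, C]) [cmp K g (prj K [cdom K g, C] 0), prj K [cdom K g, C] (Suc 0)]"
  unfolding ctimes_def by simp

lemma ctimes_idm_cmp:
  assumes "g \<in> arr K" "h \<in> arr K" "ccod K h = cdom K g"
  shows "cmp K (ctimes K g (idm K C)) (ctimes K h (idm K C)) = ctimes K (cmp K g h) (idm K C)"
  using ctimes_idm_tpl[of g "cmp K h (prj K [cdom K h, C] 0)" "prj K [cdom K h, C] (Suc 0)"] assms
  by (simp add: ctimes_idm_eq[of h] ctimes_idm_eq[of "cmp K g h"])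

end

locale automaton_cat = cartesian_cat K for K :: "('o,'m) dcat" +
  fixes n m :: nat and \<delta> :: "nat \<Rightarrow> nat \<Rightarrow> nat"
  assumes automaton: "is_automaton n m \<delta>"
begin

lemma transition_less [simp]: "i < n \<Longrightarrow> j < m \<Longrightarrow> \<delta> i j < n"
  using automaton unfolding is_automaton_def by blast

lemma rho_hom: "i < n \<Longrightarrow> rho K n m \<delta> A i \<in> hom K (prd K (replicate n A)) (prd K (replicate m A))"
  unfolding rho_def cpow_def by (rule tpl_pow_hom) (simp add: homI)

lemma rho_arr [simp]: "i < n \<Longrightarrow> rho K n m \<delta> A i \<in> arr K"
  and rho_dom [simp]: "i < n \<Longrightarrow> cdom K (rho K n m \<delta> A i) = prd K (replicate n A)"
  and rho_cod [simp]: "i < n \<Longrightarrow> ccod K (rho K n m \<delta> A i) = prd K (replicate m A)"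
  using homD[OF rho_hom] by auto

lemma prj_rho:
  "i < n \<Longrightarrow> j < m \<Longrightarrow> cmp K (prj K (replicate m A) j) (rho K n m \<delta> A i) = prj K (replicate n A) (\<delta> i j)"
  unfolding rho_def cpow_def by (rule tpl_pow_prj) (simp_all add: homI)

lemma fQ_hom:
  "f \<in> hom K (prd K [prd K (replicate m A), C]) A \<Longrightarrow>
   fQ K n m \<delta> A C f \<in> hom K (prd K [prd K (replicate n A), C]) (prd K (replicate n A))"
  unfolding fQ_def cprod2_def cpow_def by (rule tpl_pow_hom, rule homI) (use homD in auto)

lemma prj_fQ:
  "f \<in> hom K (prd K [prd K (replicate m A), C]) A \<Longrightarrow> i < n \<Longrightarrow>
   cmp K (prj K (replicate n A) i) (fQ K n m \<delta> A C f) = cmp K f (ctimes K (rho K n m \<delta> A i) (idm K C))"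
  unfolding fQ_def cprod2_def cpow_def by (rule tpl_pow_prj, rule homI) (use homD in auto)

end

definition fst_pow :: "('o,'m) dcat \<Rightarrow> nat \<Rightarrow> 'o \<Rightarrow> 'm" where
  "fst_pow K k A = tpl K (prd K (replicate k (prd K [A,A])))
     (map (\<lambda>j. cmp K (prj K [A,A] 0) (prj K (replicate k (prd K [A,A])) j)) [0..<k])"

context cartesian_cat
begin

lemma fst_pow_hom: "fst_pow K k A \<in> hom K (prd K (replicate k (prd K [A,A]))) (prd K (replicate k A))"
  and prj_fst_pow: "j < k \<Longrightarrow>
    cmp K (prj K (replicate k A) j) (fst_pow K k A) = cmp K (prj K [A,A] 0) (prj K (replicate k (prd K [A,A])) j)"
  unfolding fst_pow_def by (rule tpl_pow_hom tpl_pow_prj; simp add: homI)+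

lemma fst_pow_arr [simp]: "fst_pow K k A \<in> arr K"
  and fst_pow_dom [simp]: "cdom K (fst_pow K k A) = prd K (replicate k (prd K [A,A]))"
  and fst_pow_cod [simp]: "ccod K (fst_pow K k A) = prd K (replicate k A)"
  using homD[OF fst_pow_hom] by auto

lemma fst_pow_cdiag: "cmp K (fst_pow K k A) (cdiag K (prd K [A,A]) k) = cmp K (cdiag K A k) (prj K [A,A] 0)"
proof (rule pow_arr_eqI[of _ _ k A])
  note cdiag = homD[OF cdiag_hom]
  show "cmp K (fst_pow K k A) (cdiag K (prd K [A,A]) k) \<in> hom K (prd K [A,A]) (prd K (replicate k A))"
    using cdiag by (intro homI) simp_all
  show "cmp K (cdiag K A k) (prj K [A,A] 0) \<in> hom K (prd K [A,A]) (prd K (replicate k A))"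
    using cdiag by (intro homI) simp_all
  fix j assume "j < k"
  then show "cmp K (prj K (replicate k A) j) (cmp K (fst_pow K k A) (cdiag K (prd K [A,A]) k)) =
      cmp K (prj K (replicate k A) j) (cmp K (cdiag K A k) (prj K [A,A] 0))"
    using cdiag by (simp add: cmp_reassoc[OF prj_fst_pow] cmp_reassoc[OF prj_cdiag] prj_cdiag)
qed

end

context automaton_cat
begin

lemma fst_pow_rho:
  assumes i: "i < n"
  shows "cmp K (fst_pow K m A) (rho K n m \<delta> (prd K [A,A]) i) = cmp K (rho K n m \<delta> A i) (fst_pow K n A)"
proof (rule pow_arr_eqI[of _ _ m A])
  show "cmp K (fst_pow K m A) (rho K n m \<delta> (prd K [A,A]) i)
      \<in> hom K (prd K (replicate n (prd K [A,A]))) (prd K (replicate m A))"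
    using i by (intro homI) simp_all
  show "cmp K (rho K n m \<delta> A i) (fst_pow K n A)
      \<in> hom K (prd K (replicate n (prd K [A,A]))) (prd K (replicate m A))"
    using i by (intro homI) simp_all
  fix j assume "j < m"
  with i show "cmp K (prj K (replicate m A) j) (cmp K (fst_pow K m A) (rho K n m \<delta> (prd K [A,A]) i)) =
      cmp K (prj K (replicate m A) j) (cmp K (rho K n m \<delta> A i) (fst_pow K n A))"
    by (simp add: cmp_reassoc[OF prj_fst_pow] cmp_reassoc[OF prj_rho] prj_rho prj_fst_pow)
qed

end

definition track :: "('o,'m) dcat \<Rightarrow> nat \<Rightarrow> 'o \<Rightarrow> 'o \<Rightarrow> 'm \<Rightarrow> nat \<Rightarrow> 'm" where
  "track K m A C f a = tpl K (prd K [prd K (replicate m (prd K [A,A])), C])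
     [cmp K f (ctimes K (fst_pow K m A) (idm K C)),
      cmp K (prj K [A,A] 0) (cmp K (prj K (replicate m (prd K [A,A])) a)
        (prj K [prd K (replicate m (prd K [A,A])), C] 0))]"

definition track_state ::
    "('o,'m) dcat \<Rightarrow> nat \<Rightarrow> nat \<Rightarrow> (nat \<Rightarrow> nat \<Rightarrow> nat) \<Rightarrow> 'o \<Rightarrow> 'o \<Rightarrow> 'm \<Rightarrow> nat \<Rightarrow> nat \<Rightarrow> 'm" where
  "track_state K n m \<delta> A C f a i = tpl K (prd K [prd K (replicate n A), C])
     [cmp K f (ctimes K (rho K n m \<delta> A i) (idm K C)),
      cmp K (prj K (replicate n A) (\<delta> i a)) (prj K [prd K (replicate n A), C] 0)]"

definition track_states ::
    "('o,'m) dcat \<Rightarrow> nat \<Rightarrow> nat \<Rightarrow> (nat \<Rightarrow> nat \<Rightarrow> nat) \<Rightarrow> 'o \<Rightarrow> 'o \<Rightarrow> 'm \<Rightarrow> nat \<Rightarrow> 'm" where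
  "track_states K n m \<delta> A C f a =
     tpl K (prd K [prd K (replicate n A), C]) (map (track_state K n m \<delta> A C f a) [0..<n])"

definition track_diag :: "('o,'m) dcat \<Rightarrow> nat \<Rightarrow> 'o \<Rightarrow> 'o \<Rightarrow> 'm \<Rightarrow> 'm" where
  "track_diag K m A C f = tpl K (prd K [A, C]) [cmp K f (ctimes K (cdiag K A m) (idm K C)), prj K [A, C] 0]"

context automaton_cat
begin

context
  fixes A C f
  assumes f_hom: "f \<in> hom K (prd K [prd K (replicate m A), C]) A"
begin

declare homD[OF f_hom, simp]

lemma track_diag_hom: "track_diag K m A C f \<in> hom K (prd K [A, C]) (prd K [A,A])"
  and fst_track_diag: "cmp K (prj K [A,A] 0) (track_diag K m A C f) = cmp K f (ctimes K (cdiag K A m) (idm K C))"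
  and snd_track_diag: "cmp K (prj K [A,A] (Suc 0)) (track_diag K m A C f) = prj K [A, C] 0"
  unfolding track_diag_def using homD[OF cdiag_hom] by (simp_all add: homI)

context
  fixes a
  assumes a_less: "a < m"
begin

lemma track_hom: "track K m A C f a \<in> hom K (prd K [prd K (replicate m (prd K [A,A])), C]) (prd K [A,A])"
  unfolding track_def using a_less by (intro homI) simp_all

lemma fst_track: "cmp K (prj K [A,A] 0) (track K m A C f a) = cmp K f (ctimes K (fst_pow K m A) (idm K C))"
  and snd_track: "cmp K (prj K [A,A] (Suc 0)) (track K m A C f a) =
    cmp K (prj K [A,A] 0) (cmp K (prj K (replicate m (prd K [A,A])) a) (prj K [prd K (replicate m (prd K [A,A])), C] 0))"
  unfolding track_def using a_less by simp_all

lemma track_state_hom: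
  "i < n \<Longrightarrow> track_state K n m \<delta> A C f a i \<in> hom K (prd K [prd K (replicate n A), C]) (prd K [A,A])"
  unfolding track_state_def using a_less by (intro homI) simp_all

lemma fst_track_state:
  "i < n \<Longrightarrow> cmp K (prj K [A,A] 0) (track_state K n m \<delta> A C f a i) = cmp K f (ctimes K (rho K n m \<delta> A i) (idm K C))"
  and snd_track_state: "i < n \<Longrightarrow> cmp K (prj K [A,A] (Suc 0)) (track_state K n m \<delta> A C f a i) =
    cmp K (prj K (replicate n A) (\<delta> i a)) (prj K [prd K (replicate n A), C] 0)"
  unfolding track_state_def using a_less by simp_all

lemma track_states_hom:
  "track_states K n m \<delta> A C f a \<in> hom K (prd K [prd K (replicate n A), C]) (prd K (replicate n (prd K [A,A])))"
  and prj_track_states: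
  "i < n \<Longrightarrow> cmp K (prj K (replicate n (prd K [A,A])) i) (track_states K n m \<delta> A C f a) = track_state K n m \<delta> A C f a i"
proof -
  show "track_states K n m \<delta> A C f a \<in> hom K (prd K [prd K (replicate n A), C]) (prd K (replicate n (prd K [A,A])))"
    unfolding track_states_def by (rule tpl_pow_hom) (rule track_state_hom)
  show "i < n \<Longrightarrow> cmp K (prj K (replicate n (prd K [A,A])) i) (track_states K n m \<delta> A C f a) = track_state K n m \<delta> A C f a i"
    unfolding track_states_def by (rule tpl_pow_prj) (rule track_state_hom)
qed

lemma fQ_track_factors:
  "fQ K n m \<delta> (prd K [A,A]) C (track K m A C f a) =
   cmp K (track_states K n m \<delta> A C f a) (ctimes K (fst_pow K n A) (idm K C))"
    (is "?F = cmp K ?H ?G")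
proof (rule pow_arr_eqI[of _ _ n "prd K [A,A]"])
  let ?X = "prd K [prd K (replicate n (prd K [A,A])), C]"
  note H = homD[OF track_states_hom] and F = homD[OF track_hom]
  show "?F \<in> hom K ?X (prd K (replicate n (prd K [A,A])))"
    by (rule fQ_hom[OF track_hom])
  show "cmp K ?H ?G \<in> hom K ?X (prd K (replicate n (prd K [A,A])))"
    using H by (intro homI) simp_all
  fix i assume i: "i < n"
  note Hi = homD[OF track_state_hom[OF i]]
  show "cmp K (prj K (replicate n (prd K [A,A])) i) ?F = cmp K (prj K (replicate n (prd K [A,A])) i) (cmp K ?H ?G)"
  proof (rule pair_arr_eqI[of _ ?X A A])
    show "cmp K (prj K (replicate n (prd K [A,A])) i) ?F \<in> hom K ?X (prd K [A,A])"
      using i F by (simp add: prj_fQ[OF track_hom] homI)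
    show "cmp K (prj K (replicate n (prd K [A,A])) i) (cmp K ?H ?G) \<in> hom K ?X (prd K [A,A])"
      using i H Hi by (simp add: cmp_reassoc[OF prj_track_states] homI)
    show "cmp K (prj K [A,A] 0) (cmp K (prj K (replicate n (prd K [A,A])) i) ?F) =
        cmp K (prj K [A,A] 0) (cmp K (prj K (replicate n (prd K [A,A])) i) (cmp K ?H ?G))"
      using i F H Hi by (simp add: prj_fQ[OF track_hom] cmp_reassoc[OF fst_track] cmp_reassoc[OF prj_track_states]
          cmp_reassoc[OF fst_track_state] ctimes_idm_cmp fst_pow_rho)
    show "cmp K (prj K [A,A] (Suc 0)) (cmp K (prj K (replicate n (prd K [A,A])) i) ?F) =
        cmp K (prj K [A,A] (Suc 0)) (cmp K (prj K (replicate n (prd K [A,A])) i) (cmp K ?H ?G))"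
      using i a_less F H Hi by (simp add: prj_fQ[OF track_hom] cmp_reassoc[OF snd_track] cmp_reassoc[OF prj_track_states]
          cmp_reassoc[OF snd_track_state] cmp_reassoc[OF prj_rho] cmp_reassoc[OF prj_fst_pow])
  qed
qed

lemma fst_pow_track_states: "cmp K (fst_pow K n A) (track_states K n m \<delta> A C f a) = fQ K n m \<delta> A C f"
proof (rule pow_arr_eqI[of _ _ n A])
  note H = homD[OF track_states_hom]
  show "cmp K (fst_pow K n A) (track_states K n m \<delta> A C f a) \<in> hom K (prd K [prd K (replicate n A), C]) (prd K (replicate n A))"
    using H by (intro homI) simp_all
  show "fQ K n m \<delta> A C f \<in> hom K (prd K [prd K (replicate n A), C]) (prd K (replicate n A))"
    by (rule fQ_hom[OF f_hom])
  fix i assume i: "i < n"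
  then show "cmp K (prj K (replicate n A) i) (cmp K (fst_pow K n A) (track_states K n m \<delta> A C f a)) =
      cmp K (prj K (replicate n A) i) (fQ K n m \<delta> A C f)"
    using H homD[OF track_state_hom[OF i]]
    by (simp add: prj_fQ[OF f_hom] cmp_reassoc[OF prj_fst_pow] prj_track_states fst_track_state)
qed

lemma track_cdiag_factors:
  "cmp K (track K m A C f a) (ctimes K (cdiag K (prd K [A,A]) m) (idm K C)) =
   cmp K (track_diag K m A C f) (ctimes K (prj K [A,A] 0) (idm K C))"
proof (rule pair_arr_eqI[of _ "prd K [prd K [A,A], C]" A A])
  note F = homD[OF track_hom] and H = homD[OF track_diag_hom] and D = homD[OF cdiag_hom]
  show "cmp K (track K m A C f a) (ctimes K (cdiag K (prd K [A,A]) m) (idm K C)) \<in> hom K (prd K [prd K [A,A], C]) (prd K [A,A])"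
    using F D by (intro homI) simp_all
  show "cmp K (track_diag K m A C f) (ctimes K (prj K [A,A] 0) (idm K C)) \<in> hom K (prd K [prd K [A,A], C]) (prd K [A,A])"
    using H by (intro homI) simp_all
  show "cmp K (prj K [A,A] 0) (cmp K (track K m A C f a) (ctimes K (cdiag K (prd K [A,A]) m) (idm K C))) =
      cmp K (prj K [A,A] 0) (cmp K (track_diag K m A C f) (ctimes K (prj K [A,A] 0) (idm K C)))"
    using F H D by (simp add: cmp_reassoc[OF fst_track] cmp_reassoc[OF fst_track_diag] ctimes_idm_cmp fst_pow_cdiag)
  show "cmp K (prj K [A,A] (Suc 0)) (cmp K (track K m A C f a) (ctimes K (cdiag K (prd K [A,A]) m) (idm K C))) =
      cmp K (prj K [A,A] (Suc 0)) (cmp K (track_diag K m A C f) (ctimes K (prj K [A,A] 0) (idm K C)))"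
    using F H D a_less by (simp add: cmp_reassoc[OF snd_track] cmp_reassoc[OF snd_track_diag]
        cmp_reassoc[OF prj_cdiag])
qed

end

end

end

locale conway_cat = cartesian_cat +
  assumes conway: "is_conway K"
begin

lemma dag_hom: "f \<in> hom K (prd K [A, C]) A \<Longrightarrow> dag K C f \<in> hom K C A"
  using conway unfolding is_conway_def cprod2_def by blast

lemma dag_composition:
  "f \<in> hom K (prd K [B, C]) A \<Longrightarrow> g \<in> hom K (prd K [A, C]) B \<Longrightarrow>
   dag K C (cmp K f (tpl K (prd K [A, C]) [g, prj K [A, C] (Suc 0)])) =
   cmp K f (tpl K C [dag K C (cmp K g (tpl K (prd K [B, C]) [f, prj K [B, C] (Suc 0)])), idm K C])"
  using conway unfolding is_conway_def cprod2_def One_nat_def by blast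

lemma dag_cmp_ctimes:
  assumes f: "f \<in> hom K (prd K [B, C]) A" and h: "h \<in> hom K A B"
  shows "dag K C (cmp K f (ctimes K h (idm K C))) = cmp K f (tpl K C [dag K C (cmp K h f), idm K C])"
proof -
  let ?g = "cmp K h (prj K [A, C] 0)"
  note fD = homD[OF f] and hD = homD[OF h]
  have g: "?g \<in> hom K (prd K [A, C]) B"
    using hD by (intro homI) simp_all
  have "ctimes K h (idm K C) = tpl K (prd K [A, C]) [?g, prj K [A, C] (Suc 0)]"
    using hD by (simp add: ctimes_idm_eq)
  moreover have "cmp K ?g (tpl K (prd K [B, C]) [f, prj K [B, C] (Suc 0)]) = cmp K h f"
    using fD hD by simp
  ultimately show ?thesis
    using dag_composition[OF f g] by simp
qed

end

locale conway_automaton = automaton_cat K n m \<delta> + conway_cat K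
  for K :: "('o,'m) dcat" and n m \<delta>
begin

context
  fixes A C f a
  assumes f_hom: "f \<in> hom K (prd K [prd K (replicate m A), C]) A" and a_less: "a < m"
begin

lemma snd_prj_dag_fQ_track:
  assumes i: "i < n"
  shows "cmp K (prj K [A,A] (Suc 0)) (cmp K (prj K (replicate n (prd K [A,A])) i)
           (dag K C (fQ K n m \<delta> (prd K [A,A]) C (track K m A C f a)))) =
         cmp K (prj K (replicate n A) (\<delta> i a)) (dag K C (fQ K n m \<delta> A C f))"
proof -
  let ?x = "dag K C (fQ K n m \<delta> A C f)"
  note H = homD[OF track_states_hom[OF f_hom a_less]] and Hi = homD[OF track_state_hom[OF f_hom a_less i]]
  have x: "?x \<in> arr K" "cdom K ?x = C" "ccod K ?x = prd K (replicate n A)"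
    using homD[OF dag_hom[OF fQ_hom[OF f_hom]]] by auto
  have "dag K C (fQ K n m \<delta> (prd K [A,A]) C (track K m A C f a)) =
      cmp K (track_states K n m \<delta> A C f a) (tpl K C [?x, idm K C])"
    using dag_cmp_ctimes[OF track_states_hom[OF f_hom a_less] fst_pow_hom]
    by (simp add: fQ_track_factors[OF f_hom a_less] fst_pow_track_states[OF f_hom a_less])
  then show ?thesis
    using i x H Hi a_less by (simp add: cmp_reassoc[OF prj_track_states[OF f_hom a_less]]
        cmp_reassoc[OF snd_track_state[OF f_hom a_less]])
qed

lemma snd_dag_track_cdiag:
  "cmp K (prj K [A,A] (Suc 0)) (dag K C (cmp K (track K m A C f a) (ctimes K (cdiag K (prd K [A,A]) m) (idm K C)))) =
   dag K C (cmp K f (ctimes K (cdiag K A m) (idm K C)))"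
proof -
  let ?y = "dag K C (cmp K f (ctimes K (cdiag K A m) (idm K C)))"
  note H = homD[OF track_diag_hom[OF f_hom]]
  have "cmp K f (ctimes K (cdiag K A m) (idm K C)) \<in> hom K (prd K [A, C]) A"
    using homD[OF f_hom] homD[OF cdiag_hom] by (intro homI) simp_all
  note y = homD[OF dag_hom[OF this]]
  have "dag K C (cmp K (track K m A C f a) (ctimes K (cdiag K (prd K [A,A]) m) (idm K C))) =
      cmp K (track_diag K m A C f) (tpl K C [?y, idm K C])"
    unfolding track_cdiag_factors[OF f_hom a_less] fst_track_diag[OF f_hom, symmetric]
    by (rule dag_cmp_ctimes[OF track_diag_hom[OF f_hom] prj_hom[of 0 "[A,A]", simplified]])
  then show ?thesis
    using y H by (simp add: cmp_reassoc[OF snd_track_diag[OF f_hom]])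
qed

end

lemma Gamma_transition:
  assumes q: "q < n" and a: "a < m" and Gamma_q: "Gamma K n m \<delta> q"
  shows "Gamma K n m \<delta> (\<delta> q a)"
  unfolding Gamma_def cprod2_def cpow_def
proof (intro allI impI)
  fix A C f
  assume f: "f \<in> hom K (prd K [prd K (replicate m A), C]) A"
  have "\<And>A C f. f \<in> hom K (prd K [prd K (replicate m A), C]) A \<Longrightarrow>
      cmp K (prj K (replicate n A) q) (dag K C (fQ K n m \<delta> A C f)) =
      dag K C (cmp K f (ctimes K (cdiag K A m) (idm K C)))"
    using Gamma_q unfolding Gamma_def cprod2_def cpow_def by blast
  from this[OF track_hom[OF f a]] have "cmp K (prj K [A,A] (Suc 0)) (cmp K (prj K (replicate n (prd K [A,A])) q)
        (dag K C (fQ K n m \<delta> (prd K [A,A]) C (track K m A C f a)))) =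
      cmp K (prj K [A,A] (Suc 0)) (dag K C (cmp K (track K m A C f a) (ctimes K (cdiag K (prd K [A,A]) m) (idm K C))))"
    by (rule arg_cong)
  then show "cmp K (prj K (replicate n A) (\<delta> q a)) (dag K C (fQ K n m \<delta> A C f)) =
      dag K C (cmp K f (ctimes K (cdiag K A m) (idm K C)))"
    by (simp only: snd_prj_dag_fQ_track[OF f a q] snd_dag_track_cdiag[OF f a])
qed

end

theorem lemma4p3:
  fixes K :: "('o, 'm) dcat" and n m :: nat and \<delta> :: "nat \<Rightarrow> nat \<Rightarrow> nat" and q a :: nat
  assumes "is_conway K"
    and "is_automaton n m \<delta>"
    and "q < n" and "a < m"
    and "Gamma K n m \<delta> q"
  shows "Gamma K n m \<delta> (\<delta> q a)"
proof -
  have "is_cartesian K"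
    using assms(1) unfolding is_conway_def by blast
  then interpret conway_automaton K n m \<delta>
    using assms(1,2) by unfold_locales
  show ?thesis
    using Gamma_transition assms(3-5) .
qed

end
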